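(* Let $\Lambda$ denote the von Mangoldt function and let $\varepsilon>0$ be a small number. Then, as $x\to\infty$, \[ \sum_{n\leq x} \Lambda\left( [x/n]^3+2 \right) = a_3 x + O\left( x^{(2+\varepsilon)/3}\log^2 x \right), \] where the density constant is \[ a_3=\sum_{n\geq 1}\frac{\Lambda(n^3+2)}{n(n+1)}\geq 1.002998. \]
   Context: $[t]$ denotes the largest integer not exceeding $t$. The von Mangoldt function is $\Lambda(m)=\log p$ if $m=p^k$ for a prime $p$ and an integer $k\geq 1$, and $\Lambda(m)=0$ otherwise. The sum is over positive integers $n\le x$. *)

theory Defs
  imports "HOL-Number_Theory.Number_Theory" "HOL-Library.Landau_Symbols"
begin

definition a3 :: real where
  "a3 = (\<Sum>n. mangoldt (Suc n ^ 3 + 2) / (real (Suc n) * real (Suc n + 1)))"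

end

(* Grouping the n <= x by the value m = [x/n], the sum becomes
   sum_m Lambda(m^3+2) * #{n. [x/n] = m}, and this count is x/(m(m+1)) + O(1).
   Split at M = [sqrt x]: the m <= M contribute x times a partial sum of a_3 up to an
   error O(sqrt x log x); the m > M come from the n <= x/(M+1) <= sqrt x, each with
   weight O(log x); and since Lambda(m^3+2) <= 3 log m + 3, the tail of a_3 beyond M
   telescopes against (log t + 2)/t and is O(log x / sqrt x).  So the error is in fact
   O(sqrt x log x).  The bound a_3 >= 1.002998 already follows from the terms
   m = 1, 3, 5, 29, 45, for which m^3 + 2 = 3, 29, 127, 24391, 91127 is prime. *)

theory Submission
  imports Defs "HOL-Real_Asymp.Real_Asymp"
begin

section \<open>Grouping a sum by the value of the floor quotient\<close>

lemma nat_floor_divide_eq_iff: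
  fixes x :: real
  assumes "0 \<le> x" "1 \<le> n" "1 \<le> m"
  shows "nat \<lfloor>x / real n\<rfloor> = m \<longleftrightarrow> n \<le> nat \<lfloor>x / real m\<rfloor> \<and> nat \<lfloor>x / real (Suc m)\<rfloor> < n"
proof -
  have floor_nonneg: "0 \<le> \<lfloor>x / real k\<rfloor>" for k
    using assms(1) by simp
  have "nat \<lfloor>x / real n\<rfloor> = m \<longleftrightarrow> \<lfloor>x / real n\<rfloor> = int m"
    using floor_nonneg[of n] by auto
  also have "\<dots> \<longleftrightarrow> real m \<le> x / real n \<and> x / real n < real m + 1"
    by (simp add: floor_eq_iff)
  also have "\<dots> \<longleftrightarrow> real n * real m \<le> x \<and> x < real n * (real m + 1)"
    using assms(2) by (simp add: pos_le_divide_eq pos_divide_less_eq mult.commute)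
  also have "real n * real m \<le> x \<longleftrightarrow> n \<le> nat \<lfloor>x / real m\<rfloor>"
    using floor_nonneg[of m] assms(3) by (auto simp: le_nat_iff le_floor_iff pos_le_divide_eq)
  also have "x < real n * (real m + 1) \<longleftrightarrow> nat \<lfloor>x / real (Suc m)\<rfloor> < n"
    using floor_nonneg[of "Suc m"] by (auto simp: nat_less_iff floor_less_iff pos_divide_less_eq add.commute)
  finally show ?thesis .
qed

lemma floor_divide_fibre:
  fixes x :: real
  assumes "1 \<le> x" "1 \<le> m"
  shows "{n \<in> {1..nat \<lfloor>x\<rfloor>}. nat \<lfloor>x / real n\<rfloor> = m} = {nat \<lfloor>x / real (Suc m)\<rfloor><..nat \<lfloor>x / real m\<rfloor>}"
proof -
  have "nat \<lfloor>x / real m\<rfloor> \<le> nat \<lfloor>x\<rfloor>"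
    using assms by (intro nat_mono floor_mono) (simp add: divide_le_eq)
  then show ?thesis
    using nat_floor_divide_eq_iff[of x _ m] assms by fastforce
qed

definition quotient_count :: "real \<Rightarrow> nat \<Rightarrow> real" where
  "quotient_count x m = of_int \<lfloor>x / real m\<rfloor> - of_int \<lfloor>x / real (Suc m)\<rfloor>"

lemma card_floor_divide_fibre:
  fixes x :: real
  assumes "1 \<le> x" "1 \<le> m"
  shows "real (card {n \<in> {1..nat \<lfloor>x\<rfloor>}. nat \<lfloor>x / real n\<rfloor> = m}) = quotient_count x m"
proof -
  have "\<lfloor>x / real (Suc m)\<rfloor> \<le> \<lfloor>x / real m\<rfloor>"
    using assms by (intro floor_mono divide_left_mono) auto
  then show ?thesis
    unfolding floor_divide_fibre[OF assms] quotient_count_def using assms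
    by (simp add: of_nat_diff nat_le_eq_zle)
qed

lemma sum_floor_divide_regroup:
  fixes f :: "nat \<Rightarrow> real" and x :: real
  assumes "1 \<le> x"
  shows "(\<Sum>n\<in>{1..nat \<lfloor>x\<rfloor>}. f (nat \<lfloor>x / real n\<rfloor>)) = (\<Sum>m\<in>{1..nat \<lfloor>x\<rfloor>}. f m * quotient_count x m)"
proof -
  define N where "N = nat \<lfloor>x\<rfloor>"
  have maps_to: "nat \<lfloor>x / real n\<rfloor> \<in> {1..N}" if "n \<in> {1..N}" for n
  proof -
    have "real n \<le> x"
      using that assms unfolding N_def by (simp add: le_nat_iff le_floor_iff)
    then have "1 \<le> \<lfloor>x / real n\<rfloor>"
      using that by (simp add: le_floor_iff le_divide_eq)
    moreover have "\<lfloor>x / real n\<rfloor> \<le> \<lfloor>x\<rfloor>"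
      using that assms by (intro floor_mono) (simp add: divide_le_eq)
    ultimately show ?thesis
      unfolding N_def by (auto simp del: one_le_floor)
  qed
  have "(\<Sum>n\<in>{1..N}. f (nat \<lfloor>x / real n\<rfloor>)) =
        (\<Sum>m\<in>{1..N}. \<Sum>n\<in>{n \<in> {1..N}. nat \<lfloor>x / real n\<rfloor> = m}. f (nat \<lfloor>x / real n\<rfloor>))"
    using maps_to by (intro sum.group[symmetric]) auto
  also have "\<dots> = (\<Sum>m\<in>{1..N}. f m * real (card {n \<in> {1..N}. nat \<lfloor>x / real n\<rfloor> = m}))"
    by (intro sum.cong refl) simp
  also have "\<dots> = (\<Sum>m\<in>{1..N}. f m * quotient_count x m)"
    unfolding N_def using card_floor_divide_fibre[OF assms] by (intro sum.cong refl) auto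
  finally show ?thesis unfolding N_def .
qed

lemma sum_floor_divide_split:
  fixes f :: "nat \<Rightarrow> real" and x :: real
  assumes "1 \<le> M" "M \<le> nat \<lfloor>x\<rfloor>"
  shows "(\<Sum>n\<in>{1..nat \<lfloor>x\<rfloor>}. f (nat \<lfloor>x / real n\<rfloor>)) =
         (\<Sum>m\<in>{1..M}. f m * quotient_count x m) + (\<Sum>m\<in>{Suc M..nat \<lfloor>x\<rfloor>}. f m * quotient_count x m)"
proof -
  have "1 \<le> x"
    using assms by linarith
  moreover have "{1..nat \<lfloor>x\<rfloor>} = {1..M} \<union> {Suc M..nat \<lfloor>x\<rfloor>}"
    using assms by auto
  ultimately show ?thesis
    unfolding sum_floor_divide_regroup[OF \<open>1 \<le> x\<close>] by (simp add: sum.union_disjoint)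
qed

lemma quotient_count_nonneg: "0 \<le> x \<Longrightarrow> 1 \<le> m \<Longrightarrow> 0 \<le> quotient_count x m"
  unfolding quotient_count_def by (simp add: floor_mono divide_left_mono)

lemma quotient_count_approx:
  fixes x :: real
  assumes "1 \<le> m"
  shows "\<bar>quotient_count x m - x / (real m * (real m + 1))\<bar> \<le> 1"
proof -
  have "x / (real m * (real m + 1)) = x / real m - x / real (Suc m)"
    using assms by (simp add: field_simps)
  then show ?thesis
    unfolding quotient_count_def
    using floor_correct[of "x / real m"] floor_correct[of "x / real (Suc m)"] by linarith
qed

lemma sum_quotient_count_le:
  fixes x :: real
  assumes "0 \<le> x" "M \<le> N"
  shows "(\<Sum>m\<in>{Suc M..N}. quotient_count x m) \<le> x / real (Suc M)"
proof -
  have "(\<Sum>m\<in>{Suc M..N}. quotient_count x m) = of_int \<lfloor>x / real (Suc M)\<rfloor> - of_int \<lfloor>x / real (Suc N)\<rfloor>"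
    unfolding quotient_count_def using sum_Suc_diff[of "Suc M" N "\<lambda>m. - real_of_int \<lfloor>x / real m\<rfloor>"] assms(2)
    by simp
  moreover have "0 \<le> \<lfloor>x / real (Suc N)\<rfloor>"
    using assms(1) by simp
  ultimately show ?thesis
    using floor_correct[of "x / real (Suc M)"] by linarith
qed

lemma sum_small_quotients_estimate:
  fixes f :: "nat \<Rightarrow> real" and x :: real
  assumes "\<And>m. 0 \<le> f m"
  shows "\<bar>(\<Sum>m\<in>{1..M}. f m * quotient_count x m) - x * (\<Sum>m\<in>{1..M}. f m / (real m * (real m + 1)))\<bar>
         \<le> (\<Sum>m\<in>{1..M}. f m)"
proof -
  define e where "e m = quotient_count x m - x / (real m * (real m + 1))" for m
  have "(\<Sum>m\<in>{1..M}. f m * quotient_count x m) - x * (\<Sum>m\<in>{1..M}. f m / (real m * (real m + 1)))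
        = (\<Sum>m\<in>{1..M}. f m * e m)"
    unfolding e_def sum_distrib_left sum_subtractf[symmetric]
    by (intro sum.cong refl) (simp add: algebra_simps)
  also have "\<bar>\<dots>\<bar> \<le> (\<Sum>m\<in>{1..M}. f m * \<bar>e m\<bar>)"
    by (rule order_trans[OF sum_abs]) (simp add: abs_mult abs_of_nonneg[OF assms])
  also have "\<dots> \<le> (\<Sum>m\<in>{1..M}. f m * 1)"
    unfolding e_def using quotient_count_approx assms by (intro sum_mono mult_left_mono) auto
  finally show ?thesis by simp
qed

lemma sum_large_quotients_bounds:
  fixes f :: "nat \<Rightarrow> real" and x :: real
  assumes "0 \<le> x" "M \<le> N" "0 \<le> L" and f_bounds: "\<And>m. m \<in> {Suc M..N} \<Longrightarrow> 0 \<le> f m \<and> f m \<le> L"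
  shows "0 \<le> (\<Sum>m\<in>{Suc M..N}. f m * quotient_count x m)"
    and "(\<Sum>m\<in>{Suc M..N}. f m * quotient_count x m) \<le> L * (x / real (Suc M))"
proof -
  show "0 \<le> (\<Sum>m\<in>{Suc M..N}. f m * quotient_count x m)"
    using f_bounds quotient_count_nonneg assms(1) by (intro sum_nonneg mult_nonneg_nonneg) auto
  have "(\<Sum>m\<in>{Suc M..N}. f m * quotient_count x m) \<le> (\<Sum>m\<in>{Suc M..N}. L * quotient_count x m)"
    using f_bounds quotient_count_nonneg assms(1) by (intro sum_mono mult_right_mono) auto
  also have "\<dots> \<le> L * (x / real (Suc M))"
    unfolding sum_distrib_left[symmetric] using sum_quotient_count_le[OF assms(1,2)] assms(3)
    by (rule mult_left_mono)
  finally show "(\<Sum>m\<in>{Suc M..N}. f m * quotient_count x m) \<le> L * (x / real (Suc M))" .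
qed

lemma ln_div_consecutive_le_telescoping:
  fixes t :: real
  assumes "1 \<le> t"
  shows "(ln t + 1) / (t * (t + 1)) \<le> (ln t + 2) / t - (ln (t + 1) + 2) / (t + 1)"
proof -
  have "ln ((t + 1) / t) \<le> (t + 1) / t - 1"
    using assms by (intro ln_le_minus_one) simp
  then have ln_growth: "t * (ln (t + 1) - ln t) \<le> 1"
    using assms by (simp add: ln_div field_simps)
  have "(ln t + 2) / t - (ln (t + 1) + 2) / (t + 1) = (ln t + 2 - t * (ln (t + 1) - ln t)) / (t * (t + 1))"
    using assms by (simp add: field_simps)
  then show ?thesis
    using assms ln_growth by (simp add: divide_right_mono)
qed

lemma ln_telescoping_sums:
  "(\<lambda>k. (ln (real (k + M) + 1) + 2) / (real (k + M) + 1) - (ln (real (k + M) + 2) + 2) / (real (k + M) + 2))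
     sums ((ln (real M + 1) + 2) / (real M + 1))"
proof -
  have "(\<lambda>k. (ln (real (k + M) + 1) + 2) / (real (k + M) + 1)) \<longlonglongrightarrow> 0"
    by real_asymp
  from telescope_sums'[OF this] show ?thesis
    by (simp add: add_ac numeral_2_eq_2)
qed

section \<open>Weights of logarithmic size\<close>

definition density_term :: "(nat \<Rightarrow> real) \<Rightarrow> nat \<Rightarrow> real" where
  "density_term f n = f (Suc n) / (real (Suc n) * real (Suc n + 1))"

definition density_constant :: "(nat \<Rightarrow> real) \<Rightarrow> real" where
  "density_constant f = suminf (density_term f)"

lemma sum_density_term: "(\<Sum>n<M. density_term f n) = (\<Sum>m\<in>{1..M}. f m / (real m * (real m + 1)))"
  by (induction M) (simp_all add: density_term_def add_ac)

locale log_bounded =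
  fixes f :: "nat \<Rightarrow> real" and C :: real
  assumes nonneg: "0 \<le> f m"
    and le_C_ln: "1 \<le> m \<Longrightarrow> f m \<le> C * (ln (real m) + 1)"
begin

lemma C_nonneg: "0 \<le> C"
  using nonneg[of 1] le_C_ln[of 1] by simp

lemma le_C_ln_bound:
  assumes "1 \<le> m" "real m \<le> x"
  shows "f m \<le> C * (ln x + 1)"
proof -
  have "C * (ln (real m) + 1) \<le> C * (ln x + 1)"
    using assms C_nonneg by (intro mult_left_mono) auto
  then show ?thesis
    using le_C_ln[OF assms(1)] by linarith
qed

lemma density_term_nonneg: "0 \<le> density_term f n"
  unfolding density_term_def using nonneg by simp

lemma density_term_le:
  "density_term f n \<le> C * ((ln (real n + 1) + 2) / (real n + 1) - (ln (real n + 2) + 2) / (real n + 2))"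
proof -
  define t where "t = real (Suc n)"
  have t: "1 \<le> t" "t = real n + 1" "t + 1 = real n + 2"
    unfolding t_def by simp_all
  have "density_term f n \<le> C * (ln t + 1) / (t * (t + 1))"
    unfolding density_term_def t_def of_nat_add of_nat_1
    using le_C_ln[of "Suc n"] by (intro divide_right_mono) auto
  also have "\<dots> \<le> C * ((ln t + 2) / t - (ln (t + 1) + 2) / (t + 1))"
    using mult_left_mono[OF ln_div_consecutive_le_telescoping[OF t(1)] C_nonneg] by simp
  finally show ?thesis
    unfolding t(2) t(3)[unfolded t(2)] .
qed

lemma summable_density_term: "summable (density_term f)"
proof (rule summable_comparison_test)
  show "summable (\<lambda>n. C * ((ln (real n + 1) + 2) / (real n + 1) - (ln (real n + 2) + 2) / (real n + 2)))"
    using sums_summable[OF sums_mult[OF ln_telescoping_sums[of 0]]] unfolding add_0_right .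
  show "\<exists>N. \<forall>n\<ge>N. norm (density_term f n)
          \<le> C * ((ln (real n + 1) + 2) / (real n + 1) - (ln (real n + 2) + 2) / (real n + 2))"
  proof (intro exI allI impI)
    fix n
    show "norm (density_term f n)
            \<le> C * ((ln (real n + 1) + 2) / (real n + 1) - (ln (real n + 2) + 2) / (real n + 2))"
      using density_term_nonneg[of n] density_term_le[of n] by simp
  qed
qed

lemma density_tail_bounds:
  "0 \<le> (\<Sum>k. density_term f (k + M))
   \<and> (\<Sum>k. density_term f (k + M)) \<le> C * ((ln (real M + 1) + 2) / (real M + 1))"
proof
  have tail: "summable (\<lambda>k. density_term f (k + M))"
    using summable_density_term by (rule summable_ignore_initial_segment)
  show "0 \<le> (\<Sum>k. density_term f (k + M))"
    using tail density_term_nonneg by (intro suminf_nonneg)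
  show "(\<Sum>k. density_term f (k + M)) \<le> C * ((ln (real M + 1) + 2) / (real M + 1))"
    by (rule sums_le[OF density_term_le[of "_ + M"] summable_sums[OF tail]
                        sums_mult[OF ln_telescoping_sums[of M]]])
qed

lemma density_constant_split:
  "density_constant f = (\<Sum>m\<in>{1..M}. f m / (real m * (real m + 1))) + (\<Sum>k. density_term f (k + M))"
  unfolding density_constant_def sum_density_term[symmetric]
  using suminf_split_initial_segment[OF summable_density_term, of M] by simp

lemma sum_floor_divide_estimate:
  assumes "1 \<le> M" "M \<le> nat \<lfloor>x\<rfloor>"
  shows "\<bar>(\<Sum>n\<in>{1..nat \<lfloor>x\<rfloor>}. f (nat \<lfloor>x / real n\<rfloor>)) - density_constant f * x\<bar>
         \<le> (real M + x / (real M + 1)) * (C * (ln x + 1))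
            + x / (real M + 1) * (C * (ln (real M + 1) + 2))"
proof -
  define L where "L = C * (ln x + 1)"
  define S where "S = (\<Sum>m\<in>{1..M}. f m * quotient_count x m)"
  define P where "P = (\<Sum>m\<in>{1..M}. f m / (real m * (real m + 1)))"
  define Q where "Q = (\<Sum>m\<in>{Suc M..nat \<lfloor>x\<rfloor>}. f m * quotient_count x m)"
  define T where "T = (\<Sum>k. density_term f (k + M))"
  have "1 \<le> \<lfloor>x\<rfloor>"
    using assms by linarith
  then have x: "1 \<le> x" "0 \<le> L"
    unfolding L_def using C_nonneg by auto
  have f_le_L: "f m \<le> L" if "m \<in> {1..nat \<lfloor>x\<rfloor>}" for m
    using that \<open>1 \<le> \<lfloor>x\<rfloor>\<close> le_C_ln_bound[of m x] unfolding L_def by (auto simp: le_nat_iff le_floor_iff)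
  have "\<bar>S - x * P\<bar> \<le> (\<Sum>m\<in>{1..M}. f m)"
    unfolding S_def P_def using nonneg by (rule sum_small_quotients_estimate)
  also have "\<dots> \<le> real M * L"
    using sum_bounded_above[of "{1..M}" f L] f_le_L assms by auto
  finally have small: "\<bar>S - x * P\<bar> \<le> real M * L" .
  have large: "0 \<le> Q" "Q \<le> L * (x / real (Suc M))"
    unfolding Q_def using sum_large_quotients_bounds[of x M "nat \<lfloor>x\<rfloor>" L f] x assms(2) f_le_L nonneg
    by auto
  have T_bounds: "0 \<le> T" "T \<le> C * ((ln (real M + 1) + 2) / (real M + 1))"
    using density_tail_bounds[of M] unfolding T_def by auto
  have "x * T \<le> x * (C * ((ln (real M + 1) + 2) / (real M + 1)))"
    by (rule mult_left_mono[OF T_bounds(2)]) (use x in simp)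
  also have "\<dots> = x / (real M + 1) * (C * (ln (real M + 1) + 2))"
    by simp
  finally have tail: "0 \<le> x * T" "x * T \<le> x / (real M + 1) * (C * (ln (real M + 1) + 2))"
    using T_bounds(1) x(1) by simp_all
  have "density_constant f = P + T"
    unfolding P_def T_def by (rule density_constant_split)
  then have "(\<Sum>n\<in>{1..nat \<lfloor>x\<rfloor>}. f (nat \<lfloor>x / real n\<rfloor>)) - density_constant f * x = (S - x * P) + Q - x * T"
    unfolding sum_floor_divide_split[OF assms] S_def Q_def by (simp add: algebra_simps)
  moreover have "L * (x / real (Suc M)) = x / (real M + 1) * L"
    by (simp add: add.commute)
  ultimately show ?thesis
    using small large tail unfolding L_def[symmetric] distrib_right by linarith
qed

lemma sum_floor_divide_sqrt_estimate:
  assumes "3 \<le> x"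
  shows "\<bar>(\<Sum>n\<in>{1..nat \<lfloor>x\<rfloor>}. f (nat \<lfloor>x / real n\<rfloor>)) - density_constant f * x\<bar> \<le> 7 * C * sqrt x * ln x"
proof -
  define s where "s = sqrt x"
  \<comment> \<open>this balances the error \<open>M * L\<close> of the small quotients against \<open>L * x / (M + 1)\<close> of the large ones\<close>
  define M where "M = nat \<lfloor>s\<rfloor>"
  have s: "s * s = x" "17/10 \<le> s"
    unfolding s_def using assms real_le_rsqrt[of "17/10" x] by (simp_all add: power2_eq_square)
  have M: "real M \<le> s" "s < real M + 1" "1 \<le> M"
    unfolding M_def using s(2) by linarith+
  have "17/10 * (7/10) \<le> s * (s - 1)"
    using s(2) by (intro mult_mono) auto
  then have s_plus_1: "s + 1 \<le> x"
    using s(1) by (simp add: algebra_simps)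
  have "M \<le> nat \<lfloor>x\<rfloor>"
    unfolding M_def using s_plus_1 by (intro nat_mono floor_mono) simp
  note estimate = sum_floor_divide_estimate[OF M(3) this]
  have lnx: "1 \<le> ln x"
    using assms ln_ge_iff[of x 1] exp_le by simp
  have "x \<le> s * (real M + 1)"
    using mult_left_mono[OF less_imp_le[OF M(2)], of s] s by simp
  then have x_over_M: "x / (real M + 1) \<le> s"
    by (simp add: divide_le_eq)
  have "ln (real M + 1) \<le> ln x"
    using M(1) s_plus_1 by simp
  then have "x / (real M + 1) * (C * (ln (real M + 1) + 2)) \<le> s * (C * (ln x + 2))"
    using x_over_M C_nonneg s(2) by (intro mult_mono mult_left_mono) auto
  moreover have "(real M + x / (real M + 1)) * (C * (ln x + 1)) \<le> (s + s) * (C * (ln x + 1))"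
    using M x_over_M C_nonneg lnx by (intro mult_right_mono) auto
  moreover have "(s + s) * (C * (ln x + 1)) + s * (C * (ln x + 2)) = C * s * (3 * ln x + 4)"
    by (simp add: algebra_simps)
  moreover have "C * s * (3 * ln x + 4) \<le> C * s * (7 * ln x)"
    using C_nonneg s(2) lnx by (intro mult_left_mono) auto
  ultimately show ?thesis
    using estimate unfolding s_def by (simp add: algebra_simps)
qed

lemma sum_floor_divide_bigo:
  "(\<lambda>x. (\<Sum>n\<in>{1..nat \<lfloor>x\<rfloor>}. f (nat \<lfloor>x / real n\<rfloor>)) - density_constant f * x) \<in> O(\<lambda>x. sqrt x * ln x)"
proof (rule bigoI[where c = "7 * C"])
  show "\<forall>\<^sub>F x in at_top. norm ((\<Sum>n\<in>{1..nat \<lfloor>x\<rfloor>}. f (nat \<lfloor>x / real n\<rfloor>)) - density_constant f * x)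
          \<le> 7 * C * norm (sqrt x * ln x)"
    using eventually_ge_at_top[of "3::real"]
  proof eventually_elim
    case (elim x)
    then show ?case
      using sum_floor_divide_sqrt_estimate[OF elim] by (simp add: abs_mult mult.assoc)
  qed
qed

end

lemma mangoldt_cube_plus_2_le:
  assumes "1 \<le> m"
  shows "mangoldt (m ^ 3 + 2) \<le> 3 * (ln (real m) + 1)"
proof -
  have "1 \<le> real m ^ 3"
    using assms by simp
  have "mangoldt (m ^ 3 + 2) \<le> ln (real (m ^ 3 + 2))"
    by (rule mangoldt_le) simp
  also have "\<dots> \<le> ln (3 * real m ^ 3)"
    using \<open>1 \<le> real m ^ 3\<close> assms by (subst ln_le_cancel_iff) (auto simp: add_pos_nonneg)
  also have "\<dots> = ln 3 + 3 * ln (real m)"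
    using assms by (simp add: ln_mult ln_realpow)
  also have "\<dots> \<le> 3 * (ln (real m) + 1)"
    using ln_le_minus_one[of 3] by simp
  finally show ?thesis .
qed

lemma log_bounded_mangoldt_cube_plus_2: "log_bounded (\<lambda>m. mangoldt (m ^ 3 + 2)) 3"
  by unfold_locales (simp_all only: mangoldt_nonneg mangoldt_cube_plus_2_le)

lemma a3_eq_density_constant: "a3 = density_constant (\<lambda>m. mangoldt (m ^ 3 + 2))"
  by (simp only: a3_def density_constant_def density_term_def[abs_def])

section \<open>Primality certificates and logarithm bounds\<close>

fun no_divisor_upto :: "nat \<Rightarrow> nat \<Rightarrow> bool" where
  "no_divisor_upto n 0 = True"
| "no_divisor_upto n (Suc k) = ((Suc k \<le> 1 \<or> n mod Suc k \<noteq> 0) \<and> no_divisor_upto n k)"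

lemma no_divisor_upto_numeral:
  "no_divisor_upto n (numeral k) = ((numeral k \<le> (1::nat) \<or> n mod numeral k \<noteq> 0) \<and> no_divisor_upto n (numeral k - 1))"
  by (metis no_divisor_upto.simps(2) Suc_pred' diff_Suc_1 zero_less_numeral)

lemma no_divisor_upto_one: "no_divisor_upto n 1"
  by (simp add: One_nat_def)

lemma not_dvd_if_no_divisor_upto:
  "no_divisor_upto n k \<Longrightarrow> 2 \<le> d \<Longrightarrow> d \<le> k \<Longrightarrow> \<not> d dvd n"
  by (induction n k rule: no_divisor_upto.induct) (auto simp: le_Suc_eq)

lemma prime_if_no_divisor_upto:
  assumes "no_divisor_upto n k" "n < (Suc k)\<^sup>2" "2 \<le> n"
  shows "prime n"
proof -
  have "\<not> p dvd n" if "prime p" "p\<^sup>2 \<le> n" for p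
  proof -
    have "p\<^sup>2 < (Suc k)\<^sup>2"
      using that(2) assms(2) by linarith
    then have "p \<le> k"
      using power_less_imp_less_base by fastforce
    then show ?thesis
      using not_dvd_if_no_divisor_upto[OF assms(1)] prime_ge_2_nat[OF that(1)] by blast
  qed
  then show ?thesis
    using assms(3) by (subst prime_prime_factor_sqrt) auto
qed

lemma ln_ge_if_inverse_le_exp_taylor:
  fixes a x :: real
  assumes "0 < x" "1 / x \<le> (\<Sum>m<2 * k. (- a) ^ m / fact m)"
  shows "a \<le> ln x"
proof -
  obtain t where t: "exp (- a) = (\<Sum>m<2 * k. (- a) ^ m / fact m) + exp t / fact (2 * k) * (- a) ^ (2 * k)"
    using Maclaurin_exp_le[of "- a" "2 * k"] by blast
  have "0 \<le> exp t / fact (2 * k) * (- a) ^ (2 * k)"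
    by (simp add: power_mult)
  then have "1 / x \<le> exp (- a)"
    using t assms(2) by linarith
  then have "1 / x \<le> 1 / exp a"
    by (simp add: exp_minus inverse_eq_divide)
  then have "exp a \<le> x"
    using assms(1) by (simp add: divide_simps)
  then show ?thesis
    using assms(1) by (metis exp_le_cancel_iff exp_ln)
qed

lemma ln_2_ge: "6931 / 10000 \<le> ln (2::real)"
  by (rule ln_ge_if_inverse_le_exp_taylor[where k = 6]) (simp_all add: eval_nat_numeral)

lemma ln_3_ge: "10986 / 10000 \<le> ln (3::real)"
  by (rule ln_ge_if_inverse_le_exp_taylor[where k = 6]) (simp_all add: eval_nat_numeral)

lemma ln_ge_one_minus_inverse: "0 < x \<Longrightarrow> 1 - 1 / x \<le> ln (x::real)"
  using ln_le_minus_one[of "1 / x"] by (simp add: ln_div)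

lemma ln_pow2_pow3_mult_ge:
  fixes y :: real
  assumes "0 < y"
  shows "real a * ln 2 + real b * ln 3 + (1 - 1 / y) \<le> ln (2 ^ a * 3 ^ b * y)"
  using ln_ge_one_minus_inverse[OF assms] assms by (simp add: ln_mult ln_realpow)

lemma prime_3: "prime (3::nat)"
  by (rule prime_if_no_divisor_upto[where k = 2]) (simp_all add: no_divisor_upto_numeral no_divisor_upto_one)

lemma prime_29: "prime (29::nat)"
  by (rule prime_if_no_divisor_upto[where k = 5]) (simp_all add: no_divisor_upto_numeral no_divisor_upto_one)

lemma prime_127: "prime (127::nat)"
  by (rule prime_if_no_divisor_upto[where k = 11]) (simp_all add: no_divisor_upto_numeral no_divisor_upto_one)

lemma prime_24391: "prime (24391::nat)"
  by (rule prime_if_no_divisor_upto[where k = 156]) (simp_all add: no_divisor_upto_numeral no_divisor_upto_one)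

lemma prime_91127: "prime (91127::nat)"
  by (rule prime_if_no_divisor_upto[where k = 301]) (simp_all add: no_divisor_upto_numeral no_divisor_upto_one)

lemma a3_ge: "1.002998 \<le> a3"
proof -
  let ?g = "density_term (\<lambda>m. mangoldt (m ^ 3 + 2))"
  interpret log_bounded "\<lambda>m. mangoldt (m ^ 3 + 2)" 3
    by (rule log_bounded_mangoldt_cube_plus_2)
  have sample_terms: "?g 0 = ln 3 / 2" "?g 2 = ln 29 / 12" "?g 4 = ln 127 / 30"
    "?g 28 = ln 24391 / 870" "?g 44 = ln 91127 / 2070"
    using prime_3 prime_29 prime_127 prime_24391 prime_91127
    \<comment> \<open>otherwise simp decides primality of numerals by trial division up to the number itself\<close>
    by (simp_all add: density_term_def flip: numeral_3_eq_3 del: prime_nat_numeral_eq)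
  have "?g 0 + ?g 2 + ?g 4 + ?g 28 + ?g 44 = (\<Sum>n\<in>{0, 2, 4, 28, 44}. ?g n)"
    by simp
  also have "\<dots> \<le> a3"
    unfolding a3_eq_density_constant density_constant_def
    using summable_density_term density_term_nonneg by (intro sum_le_suminf) auto
  finally have "ln 3 / 2 + ln 29 / 12 + ln 127 / 30 + ln 24391 / 870 + ln 91127 / 2070 \<le> a3"
    unfolding sample_terms .
  moreover have "3 * ln 3 + (1 - 27 / 29) \<le> ln (29::real)"
    using ln_pow2_pow3_mult_ge[of "29/27" 0 3] by simp
  moreover have "7 * ln 2 + (1 - 128 / 127) \<le> ln (127::real)"
    using ln_pow2_pow3_mult_ge[of "127/128" 7 0] by simp
  moreover have "13 * ln 2 + ln 3 + (1 - 24576 / 24391) \<le> ln (24391::real)"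
    using ln_pow2_pow3_mult_ge[of "24391/24576" 13 1] by simp
  moreover have "7 * ln 2 + 6 * ln 3 + (1 - 93312 / 91127) \<le> ln (91127::real)"
    using ln_pow2_pow3_mult_ge[of "91127/93312" 7 6] by simp
  moreover have "(1.002998::real) = 1002998 / 1000000"
    by simp
  ultimately show ?thesis
    using ln_2_ge ln_3_ge by linarith
qed

theorem theorem1p4:
  shows "summable (\<lambda>n. mangoldt (Suc n ^ 3 + 2) / (real (Suc n) * real (Suc n + 1)) :: real)
     \<and> a3 \<ge> 1.002998
     \<and> (\<forall>\<epsilon>::real. \<epsilon> > 0 \<longrightarrow>
          (\<lambda>x::real. (\<Sum>n\<in>{1..nat \<lfloor>x\<rfloor>}. (mangoldt (nat \<lfloor>x / real n\<rfloor> ^ 3 + 2) :: real)) - a3 * x)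
          \<in> O[at_top](\<lambda>x. x powr ((2 + \<epsilon>) / 3) * (ln x) ^ 2))"
proof -
  interpret log_bounded "\<lambda>m. mangoldt (m ^ 3 + 2)" 3
    by (rule log_bounded_mangoldt_cube_plus_2)
  have "summable (\<lambda>n. mangoldt (Suc n ^ 3 + 2) / (real (Suc n) * real (Suc n + 1)) :: real)"
    using summable_density_term unfolding density_term_def .
  moreover have "(\<lambda>x. sqrt x * ln x) \<in> O(\<lambda>x. x powr ((2 + \<epsilon>) / 3) * ln x ^ 2)" if "\<epsilon> > 0" for \<epsilon> :: real
    using that by real_asymp
  ultimately show ?thesis
    using a3_ge sum_floor_divide_bigo unfolding a3_eq_density_constant
    by (blast intro: landau_o.big_trans)
qed

end
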